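(* Let $\mathbf{L}\in\{\mathbf{K}_D,\mathbf{KD}_D,\mathbf{KT}_D\}$. If $\mathsf{G}(\mathbf{L})\vdash\Gamma\Rightarrow\Delta$, then $\mathsf{H}(\mathbf{L})\vdash\Gamma_\star\rightarrow\Delta^\star$, where $\Gamma_\star$ is the conjunction of all formulas in $\Gamma$ ($\top$ if $\Gamma$ is empty) and $\Delta^\star$ is the disjunction of all formulas in $\Delta$ ($\bot$ if $\Delta$ is empty).
   Context: Language: fix a finite nonempty set $\mathsf{Agt}$ of agents and a countable set $\mathsf{Prop}$ of propositional variables; $\mathsf{Grp}$ is the set of nonempty subsets of $\mathsf{Agt}$. Formulas: $\alpha::=p\mid\bot\mid\alpha\wedge\alpha\mid\alpha\vee\alpha\mid\alpha\rightarrow\alpha\mid\neg\alpha\mid D_G\alpha$ ($p\in\mathsf{Prop}$, $G\in\mathsf{Grp}$). Outmost-boxed formula: one of the form $D_G\gamma$. Hilbert systems: $\mathsf{H}(\mathbf{K}_D)$ has all instances of propositional tautologies, $D_G(\alpha\rightarrow\beta)\rightarrow(D_G\alpha\rightarrow D_G\beta)$, $D_G\alpha\rightarrow D_H\alpha$ for $G\subseteq H$, modus ponens, and necessitation (from $\alpha$ infer $D_G\alpha$). $\mathsf{H}(\mathbf{KD}_D)$ adds $\neg D_{\{a\}}\bot$ for each $a\in\mathsf{Agt}$; $\mathsf{H}(\mathbf{KT}_D)$ adds $D_G\alpha\rightarrow\alpha$. Sequent calculi (sequents $\Gamma\Rightarrow\Delta$ are pairs of finite multisets; derivable = root of a finite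 tree built from initial sequents by rules): $\mathsf{G}(\mathbf{K}_D)$ has initial sequents $\Gamma,p\Rightarrow p,\Delta$ and $\bot,\Gamma\Rightarrow\Delta$; rules $(R\wedge)$ from $\Gamma\Rightarrow\Delta,\alpha_1$ and $\Gamma\Rightarrow\Delta,\alpha_2$ infer $\Gamma\Rightarrow\Delta,\alpha_1\wedge\alpha_2$; $(L\wedge)$ from $\alpha_1,\alpha_2,\Gamma\Rightarrow\Delta$ infer $\alpha_1\wedge\alpha_2,\Gamma\Rightarrow\Delta$; $(R\vee)$ from $\Gamma\Rightarrow\Delta,\alpha_1,\alpha_2$ infer $\Gamma\Rightarrow\Delta,\alpha_1\vee\alpha_2$; $(L\vee)$ from $\alpha_1,\Gamma\Rightarrow\Delta$ and $\alpha_2,\Gamma\Rightarrow\Delta$ infer $\alpha_1\vee\alpha_2,\Gamma\Rightarrow\Delta$; $(R\rightarrow)$ from $\alpha_1,\Gamma\Rightarrow\Delta,\alpha_2$ infer $\Gamma\Rightarrow\Delta,\alpha_1\rightarrow\alpha_2$; $(L\rightarrow)$ from $\Gamma\Rightarrow\Delta,\alpha_1$ and $\alpha_2,\Gamma\Rightarrow\Delta$ infer $\alpha_1\rightarrow\alpha_2,\Gamma\Rightarrow\Delta$; $(R\neg)$ from $\alpha,\Gamma\Rightarrow\Delta$ infer $\Gamma\Rightarrow\Delta,\neg\alpha$; $(L\neg)$ from $\Gamma\Rightarrow\Delta,\alpha$ infer $\neg\alpha,\Gamma\Rightarrow\Delta$; $(D_K)$: from $\alpha_1,\dots,\alpha_n\Rightarrow\beta$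 ($n\ge0$) infer $\Sigma,D_{G_1}\alpha_1,\dots,D_{G_n}\alpha_n\Rightarrow D_G\beta,\Omega$ where all $G_i\subseteq G$, $\Sigma$ consists only of propositional variables, $\bot$, and $D_H\gamma$ with $H\not\subseteq G$, and $\Omega$ only of propositional variables, $\bot$, outmost-boxed formulas. $\mathsf{G}(\mathbf{KD}_D)$ adds $(D_D)$: from $\Gamma\Rightarrow$ with $\Gamma\neq\emptyset$ infer $\Sigma,D_{\{a\}}\Gamma\Rightarrow\Omega$, $\Sigma$ only propositional variables, $\bot$, $D_H\gamma$ with $H\neq\{a\}$; $\Omega$ only propositional variables, $\bot$, outmost-boxed formulas. $\mathsf{G}(\mathbf{KT}_D)$ adds to $\mathsf{G}(\mathbf{K}_D)$ $(D_T)$: from $D_G\alpha,\alpha,\Gamma\Rightarrow\Delta$ infer $D_G\alpha,\Gamma\Rightarrow\Delta$. *)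

theory Defs
  imports "HOL-Library.Multiset"
begin

text \<open>Formulas over agents 'a (a finite type, nonempty as every HOL type) and
propositional variables nat (a countable set).  Group indices are sets of agents;
only nonempty ones belong to Grp, enforced by the predicate wff.\<close>

datatype 'a fm =
    Atom nat
  | Bot
  | And "'a fm" "'a fm"
  | Or "'a fm" "'a fm"
  | Imp "'a fm" "'a fm"
  | Neg "'a fm"
  | Dbox "'a set" "'a fm"

definition Grp :: "'a set set" where
  "Grp = {G. G \<noteq> {}}"

fun wff :: "'a fm \<Rightarrow> bool" where
  "wff (Atom p) = True"
| "wff Bot = True"
| "wff (And a b) = (wff a \<and> wff b)"
| "wff (Or a b) = (wff a \<and> wff b)"
| "wff (Imp a b) = (wff a \<and> wff b)"
| "wff (Neg a) = wff a"
| "wff (Dbox G a) = (G \<in> Grp \<and> wff a)"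

text \<open>Propositional evaluation, treating atoms and outmost-boxed formulas as
propositional letters; tautology instances are formulas true under all such valuations.\<close>

fun peval :: "('a fm \<Rightarrow> bool) \<Rightarrow> 'a fm \<Rightarrow> bool" where
  "peval v (Atom p) = v (Atom p)"
| "peval v Bot = False"
| "peval v (And a b) = (peval v a \<and> peval v b)"
| "peval v (Or a b) = (peval v a \<or> peval v b)"
| "peval v (Imp a b) = (peval v a \<longrightarrow> peval v b)"
| "peval v (Neg a) = (\<not> peval v a)"
| "peval v (Dbox G a) = v (Dbox G a)"

definition taut :: "'a fm \<Rightarrow> bool" where
  "taut a = (\<forall>v. peval v a)"

datatype logic = LK | LKD | LKT

inductive hilbert :: "logic \<Rightarrow> ('a::finite) fm \<Rightarrow> bool" for L where
  ax_taut: "wff a \<Longrightarrow> taut a \<Longrightarrow> hilbert L a"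
| ax_K: "G \<in> Grp \<Longrightarrow> wff a \<Longrightarrow> wff b \<Longrightarrow>
     hilbert L (Imp (Dbox G (Imp a b)) (Imp (Dbox G a) (Dbox G b)))"
| ax_mono: "G \<in> Grp \<Longrightarrow> H \<in> Grp \<Longrightarrow> G \<subseteq> H \<Longrightarrow> wff a \<Longrightarrow>
     hilbert L (Imp (Dbox G a) (Dbox H a))"
| ax_D: "L = LKD \<Longrightarrow> hilbert L (Neg (Dbox {ag} Bot))"
| ax_T: "L = LKT \<Longrightarrow> G \<in> Grp \<Longrightarrow> wff a \<Longrightarrow> hilbert L (Imp (Dbox G a) a)"
| mp: "hilbert L (Imp a b) \<Longrightarrow> hilbert L a \<Longrightarrow> hilbert L b"
| nec: "G \<in> Grp \<Longrightarrow> hilbert L a \<Longrightarrow> hilbert L (Dbox G a)"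

definition is_boxed :: "'a fm \<Rightarrow> bool" where
  "is_boxed a = (\<exists>H g. a = Dbox H g)"

definition ok_right :: "'a fm \<Rightarrow> bool" where
  "ok_right a = ((\<exists>p. a = Atom p) \<or> a = Bot \<or> is_boxed a)"

definition ok_left_K :: "'a set \<Rightarrow> 'a fm \<Rightarrow> bool" where
  "ok_left_K G a = ((\<exists>p. a = Atom p) \<or> a = Bot \<or> (\<exists>H g. a = Dbox H g \<and> \<not> H \<subseteq> G))"

definition ok_left_D :: "'a \<Rightarrow> 'a fm \<Rightarrow> bool" where
  "ok_left_D ag a = ((\<exists>p. a = Atom p) \<or> a = Bot \<or> (\<exists>H g. a = Dbox H g \<and> H \<noteq> {ag}))"

text \<open>Sequent calculi G(K_D), G(KD_D), G(KT_D); sequents are pairs of finite multisets.\<close>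

inductive gder :: "logic \<Rightarrow> ('a::finite) fm multiset \<Rightarrow> 'a fm multiset \<Rightarrow> bool" for L where
  init_p: "gder L (add_mset (Atom p) \<Gamma>) (add_mset (Atom p) \<Delta>)"
| init_bot: "gder L (add_mset Bot \<Gamma>) \<Delta>"
| R_and: "gder L \<Gamma> (add_mset a \<Delta>) \<Longrightarrow> gder L \<Gamma> (add_mset b \<Delta>) \<Longrightarrow>
     gder L \<Gamma> (add_mset (And a b) \<Delta>)"
| L_and: "gder L (add_mset a (add_mset b \<Gamma>)) \<Delta> \<Longrightarrow> gder L (add_mset (And a b) \<Gamma>) \<Delta>"
| R_or: "gder L \<Gamma> (add_mset a (add_mset b \<Delta>)) \<Longrightarrow> gder L \<Gamma> (add_mset (Or a b) \<Delta>)"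
| L_or: "gder L (add_mset a \<Gamma>) \<Delta> \<Longrightarrow> gder L (add_mset b \<Gamma>) \<Delta> \<Longrightarrow>
     gder L (add_mset (Or a b) \<Gamma>) \<Delta>"
| R_imp: "gder L (add_mset a \<Gamma>) (add_mset b \<Delta>) \<Longrightarrow> gder L \<Gamma> (add_mset (Imp a b) \<Delta>)"
| L_imp: "gder L \<Gamma> (add_mset a \<Delta>) \<Longrightarrow> gder L (add_mset b \<Gamma>) \<Delta> \<Longrightarrow>
     gder L (add_mset (Imp a b) \<Gamma>) \<Delta>"
| R_neg: "gder L (add_mset a \<Gamma>) \<Delta> \<Longrightarrow> gder L \<Gamma> (add_mset (Neg a) \<Delta>)"
| L_neg: "gder L \<Gamma> (add_mset a \<Delta>) \<Longrightarrow> gder L (add_mset (Neg a) \<Gamma>) \<Delta>"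
| D_K: "gder L (mset (map snd prs)) {#b#} \<Longrightarrow>
     (\<forall>Gi \<in> set (map fst prs). Gi \<subseteq> G) \<Longrightarrow>
     (\<forall>s \<in># \<Sigma>. ok_left_K G s) \<Longrightarrow> (\<forall>w \<in># \<Omega>. ok_right w) \<Longrightarrow>
     gder L (\<Sigma> + mset (map (\<lambda>(Gi, a). Dbox Gi a) prs)) (add_mset (Dbox G b) \<Omega>)"
| D_D: "L = LKD \<Longrightarrow> gder L \<Gamma> {#} \<Longrightarrow> \<Gamma> \<noteq> {#} \<Longrightarrow>
     (\<forall>s \<in># \<Sigma>. ok_left_D ag s) \<Longrightarrow> (\<forall>w \<in># \<Omega>. ok_right w) \<Longrightarrow>
     gder L (\<Sigma> + image_mset (Dbox {ag}) \<Gamma>) \<Omega>"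
| D_T: "L = LKT \<Longrightarrow> gder L (add_mset (Dbox G a) (add_mset a \<Gamma>)) \<Delta> \<Longrightarrow>
     gder L (add_mset (Dbox G a) \<Gamma>) \<Delta>"

definition Top :: "'a fm" where "Top = Neg Bot"

fun Conj :: "'a fm list \<Rightarrow> 'a fm" where
  "Conj [] = Top"
| "Conj [a] = a"
| "Conj (a # as) = And a (Conj as)"

fun Disj :: "'a fm list \<Rightarrow> 'a fm" where
  "Disj [] = Bot"
| "Disj [a] = a"
| "Disj (a # as) = Or a (Disj as)"

end

theory Submission
  imports Defs
begin

text \<open>Every rule of the sequent calculi is sound for the reading of a sequent as the
implication from the conjunction of its antecedent to the disjunction of its succedent.
For the propositional rules (and the initial sequents) this reading of the conclusion is a
tautological consequence of that of the premises, and tautological consequence is closed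
under Hilbert provability.  The modal rules need the derived rule of regularity: from
\<open>\<alpha>\<^sub>1 \<and> \<dots> \<and> \<alpha>\<^sub>n \<rightarrow> \<beta>\<close> infer \<open>D\<^sub>G\<alpha>\<^sub>1 \<and> \<dots> \<and> D\<^sub>G\<alpha>\<^sub>n \<rightarrow> D\<^sub>G\<beta>\<close>, combined with monotonicity in the group
for \<open>(D\<^sub>K)\<close>, with axiom D for \<open>(D\<^sub>D)\<close> and with axiom T for \<open>(D\<^sub>T)\<close>.\<close>

lemma peval_Conj: "peval v (Conj gs) = (\<forall>g \<in> set gs. peval v g)"
  by (induction gs rule: Conj.induct) (auto simp: Top_def)

lemma peval_Disj: "peval v (Disj ds) = (\<exists>d \<in> set ds. peval v d)"
  by (induction ds rule: Disj.induct) auto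

lemma wff_Conj: "wff (Conj gs) = (\<forall>g \<in> set gs. wff g)"
  by (induction gs rule: Conj.induct) (auto simp: Top_def)

lemma wff_Disj: "wff (Disj ds) = (\<forall>d \<in> set ds. wff d)"
  by (induction ds rule: Disj.induct) auto

lemma hilbert_wff: "hilbert L a \<Longrightarrow> wff a"
  by (induction rule: hilbert.induct) (auto simp: Grp_def)

lemma hilbert_tautological_consequence:
  assumes "\<forall>p \<in> set Ps. hilbert L p" and "wff c"
    and "\<forall>v. (\<forall>p \<in> set Ps. peval v p) \<longrightarrow> peval v c"
  shows "hilbert L c"
  using assms
proof (induction Ps arbitrary: c)
  case Nil
  then show ?case by (auto intro: ax_taut simp: taut_def)
next
  case (Cons p Ps)
  have "hilbert L (Imp p c)"
    using Cons by (intro Cons.IH) (auto dest: hilbert_wff)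
  then show ?case using Cons.prems by (auto intro: mp)
qed

lemma hilbert_box_regular:
  assumes "G \<in> Grp" and "hilbert L (Imp (Conj as) b)"
  shows "hilbert L (Imp (Conj (map (Dbox G) as)) (Dbox G b))"
  using assms(2)
proof (induction as arbitrary: b)
  case Nil
  then have "hilbert L b"
    by (intro hilbert_tautological_consequence[where Ps = "[Imp (Conj []) b]"])
      (auto dest: hilbert_wff simp: Top_def)
  then have "hilbert L (Dbox G b)" by (rule nec[OF assms(1)])
  then show ?case
    using assms(1) by (intro hilbert_tautological_consequence[where Ps = "[Dbox G b]"])
      (auto dest: hilbert_wff simp: Top_def)
next
  case (Cons a as)
  have wff: "wff a" "\<forall>g \<in> set as. wff g" "wff b"
    using hilbert_wff[OF Cons.prems] by (auto simp: wff_Conj)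
  have "hilbert L (Imp (Conj as) (Imp a b))"
    using Cons.prems wff
    by (intro hilbert_tautological_consequence[where Ps = "[Imp (Conj (a # as)) b]"])
      (auto simp: peval_Conj wff_Conj)
  then have IH: "hilbert L (Imp (Conj (map (Dbox G) as)) (Dbox G (Imp a b)))"
    by (rule Cons.IH)
  have K: "hilbert L (Imp (Dbox G (Imp a b)) (Imp (Dbox G a) (Dbox G b)))"
    using assms(1) wff by (intro ax_K)
  show ?case
    using IH K assms(1) wff
    by (intro hilbert_tautological_consequence[where Ps = "[Imp (Conj (map (Dbox G) as)) (Dbox G (Imp a b)),
          Imp (Dbox G (Imp a b)) (Imp (Dbox G a) (Dbox G b))]"])
      (auto simp: peval_Conj wff_Conj)
qed

definition seq_holds :: "('a fm \<Rightarrow> bool) \<Rightarrow> 'a fm multiset \<Rightarrow> 'a fm multiset \<Rightarrow> bool" where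
  "seq_holds v \<Gamma> \<Delta> \<longleftrightarrow> (\<forall>g \<in># \<Gamma>. peval v g) \<longrightarrow> (\<exists>d \<in># \<Delta>. peval v d)"

definition seq_provable :: "logic \<Rightarrow> ('a::finite) fm multiset \<Rightarrow> 'a fm multiset \<Rightarrow> bool" where
  "seq_provable L \<Gamma> \<Delta> \<longleftrightarrow>
     (\<forall>gs ds. mset gs = \<Gamma> \<longrightarrow> mset ds = \<Delta> \<longrightarrow> hilbert L (Imp (Conj gs) (Disj ds)))"

lemma peval_sequent_formula: "peval v (Imp (Conj gs) (Disj ds)) = seq_holds v (mset gs) (mset ds)"
  by (simp add: seq_holds_def peval_Conj peval_Disj)

lemma seq_provable_from_premises:
  assumes "\<forall>(\<Gamma>', \<Delta>') \<in> set Ss. seq_provable L \<Gamma>' \<Delta>'"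
    and "\<forall>p \<in> set Ps. hilbert L p"
    and "\<forall>a \<in># \<Gamma> + \<Delta>. wff a"
    and "\<forall>v. (\<forall>p \<in> set Ps. peval v p) \<longrightarrow> (\<forall>(\<Gamma>', \<Delta>') \<in> set Ss. seq_holds v \<Gamma>' \<Delta>') \<longrightarrow>
           seq_holds v \<Gamma> \<Delta>"
  shows "seq_provable L \<Gamma> \<Delta>"
  using assms
proof (induction Ss arbitrary: Ps)
  case Nil
  show ?case
    unfolding seq_provable_def
  proof (intro allI impI)
    fix gs ds
    assume "mset gs = \<Gamma>" "mset ds = \<Delta>"
    with Nil show "hilbert L (Imp (Conj gs) (Disj ds))"
      by (intro hilbert_tautological_consequence[where Ps = Ps])
        (auto simp: seq_holds_def peval_Conj peval_Disj wff_Conj wff_Disj)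
  qed
next
  case (Cons S Ss)
  obtain \<Gamma>' \<Delta>' where S: "S = (\<Gamma>', \<Delta>')" by fastforce
  obtain gs ds where gs: "mset gs = \<Gamma>'" and ds: "mset ds = \<Delta>'" by (metis ex_mset)
  obtain P where "hilbert L P" and P_holds: "\<And>v. peval v P \<longleftrightarrow> seq_holds v \<Gamma>' \<Delta>'"
  proof
    show "hilbert L (Imp (Conj gs) (Disj ds))"
      using Cons.prems(1) S gs ds by (auto simp: seq_provable_def)
    show "peval v (Imp (Conj gs) (Disj ds)) \<longleftrightarrow> seq_holds v \<Gamma>' \<Delta>'" for v
      unfolding peval_sequent_formula gs ds ..
  qed
  with Cons.prems S show ?case
    by (intro Cons.IH[where Ps = "P # Ps"]) auto
qed

lemma seq_provable_D_K_rule: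
  assumes "seq_provable L (mset (map snd prs)) {#b#}"
    and "\<forall>Gi \<in> set (map fst prs). Gi \<subseteq> G"
    and wff: "\<forall>a \<in># \<Sigma> + mset (map (\<lambda>(Gi, a). Dbox Gi a) prs) + add_mset (Dbox G b) \<Omega>. wff a"
  shows "seq_provable L (\<Sigma> + mset (map (\<lambda>(Gi, a). Dbox Gi a) prs)) (add_mset (Dbox G b) \<Omega>)"
proof -
  let ?as = "map snd prs"
  let ?monos = "map (\<lambda>(Gi, a). Imp (Dbox Gi a) (Dbox G a)) prs"
  have G: "G \<in> Grp" and wff_prs: "\<forall>(Gi, a) \<in> set prs. Gi \<in> Grp \<and> wff a"
    using wff by (auto simp: ball_Un)
  have "hilbert L (Imp (Conj ?as) (Disj [b]))"
    using assms(1) unfolding seq_provable_def by simp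
  then have regular: "hilbert L (Imp (Conj (map (Dbox G) ?as)) (Dbox G b))"
    by (intro hilbert_box_regular[OF G]) simp
  have mono: "\<forall>p \<in> set ?monos. hilbert L p"
    using wff_prs assms(2) G by (force intro: ax_mono)
  have "seq_holds v (\<Sigma> + mset (map (\<lambda>(Gi, a). Dbox Gi a) prs)) (add_mset (Dbox G b) \<Omega>)"
    if regular_holds: "peval v (Imp (Conj (map (Dbox G) ?as)) (Dbox G b))"
      and monos_hold: "\<forall>p \<in> set ?monos. peval v p" for v
    unfolding seq_holds_def
  proof
    assume "\<forall>g \<in># \<Sigma> + mset (map (\<lambda>(Gi, a). Dbox Gi a) prs). peval v g"
    then have "v (Dbox Gi a)" if "(Gi, a) \<in> set prs" for Gi a
      using that by force
    then have "v (Dbox G a)" if "(Gi, a) \<in> set prs" for Gi a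
      using monos_hold that by fastforce
    then have "peval v (Conj (map (Dbox G) ?as))"
      by (force simp: peval_Conj)
    then show "\<exists>d \<in># add_mset (Dbox G b) \<Omega>. peval v d"
      using regular_holds by simp
  qed
  with regular mono wff show ?thesis
    by (intro seq_provable_from_premises[where Ss = "[]"
          and Ps = "Imp (Conj (map (Dbox G) ?as)) (Dbox G b) # ?monos"]) auto
qed

lemma seq_provable_D_D_rule:
  assumes "L = LKD" and "seq_provable L \<Gamma> {#}"
    and wff: "\<forall>a \<in># \<Sigma> + image_mset (Dbox {ag}) \<Gamma> + \<Omega>. wff a"
  shows "seq_provable L (\<Sigma> + image_mset (Dbox {ag}) \<Gamma>) \<Omega>"
proof -
  obtain gs where gs: "mset gs = \<Gamma>" by (metis ex_mset)
  have ag: "{ag} \<in> Grp" by (simp add: Grp_def)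
  have "hilbert L (Imp (Conj gs) (Disj []))"
    using assms(2) gs unfolding seq_provable_def by (metis mset.simps(1))
  then have regular: "hilbert L (Imp (Conj (map (Dbox {ag}) gs)) (Dbox {ag} Bot))"
    by (intro hilbert_box_regular[OF ag]) simp
  have "seq_holds v (\<Sigma> + image_mset (Dbox {ag}) \<Gamma>) \<Omega>"
    if "peval v (Imp (Conj (map (Dbox {ag}) gs)) (Dbox {ag} Bot))" and "peval v (Neg (Dbox {ag} Bot))"
    for v
    using that by (auto simp: seq_holds_def peval_Conj ball_Un gs[symmetric])
  with regular ax_D[OF assms(1)] wff show ?thesis
    by (intro seq_provable_from_premises[where Ss = "[]"
          and Ps = "[Imp (Conj (map (Dbox {ag}) gs)) (Dbox {ag} Bot), Neg (Dbox {ag} Bot)]"]) auto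
qed

lemma gder_seq_provable:
  "gder L \<Gamma> \<Delta> \<Longrightarrow> \<forall>a \<in># \<Gamma> + \<Delta>. wff a \<Longrightarrow> seq_provable L \<Gamma> \<Delta>"
proof (induction rule: gder.induct)
  case (init_p p \<Gamma> \<Delta>)
  then show ?case
    by (intro seq_provable_from_premises[where Ss = "[]" and Ps = "[]"]) (auto simp: seq_holds_def)
next
  case (init_bot \<Gamma> \<Delta>)
  then show ?case
    by (intro seq_provable_from_premises[where Ss = "[]" and Ps = "[]"]) (auto simp: seq_holds_def)
next
  case (R_and \<Gamma> a \<Delta> b)
  then show ?case
    by (intro seq_provable_from_premises[where Ss = "[(\<Gamma>, add_mset a \<Delta>), (\<Gamma>, add_mset b \<Delta>)]"
          and Ps = "[]"]) (auto simp: seq_holds_def)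
next
  case (L_and a b \<Gamma> \<Delta>)
  then show ?case
    by (intro seq_provable_from_premises[where Ss = "[(add_mset a (add_mset b \<Gamma>), \<Delta>)]"
          and Ps = "[]"]) (auto simp: seq_holds_def)
next
  case (R_or \<Gamma> a b \<Delta>)
  then show ?case
    by (intro seq_provable_from_premises[where Ss = "[(\<Gamma>, add_mset a (add_mset b \<Delta>))]"
          and Ps = "[]"]) (auto simp: seq_holds_def)
next
  case (L_or a \<Gamma> \<Delta> b)
  then show ?case
    by (intro seq_provable_from_premises[where Ss = "[(add_mset a \<Gamma>, \<Delta>), (add_mset b \<Gamma>, \<Delta>)]"
          and Ps = "[]"]) (auto simp: seq_holds_def)
next
  case (R_imp a \<Gamma> b \<Delta>)
  then show ?case
    by (intro seq_provable_from_premises[where Ss = "[(add_mset a \<Gamma>, add_mset b \<Delta>)]"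
          and Ps = "[]"]) (auto simp: seq_holds_def)
next
  case (L_imp \<Gamma> a \<Delta> b)
  then show ?case
    by (intro seq_provable_from_premises[where Ss = "[(\<Gamma>, add_mset a \<Delta>), (add_mset b \<Gamma>, \<Delta>)]"
          and Ps = "[]"]) (auto simp: seq_holds_def)
next
  case (R_neg a \<Gamma> \<Delta>)
  then show ?case
    by (intro seq_provable_from_premises[where Ss = "[(add_mset a \<Gamma>, \<Delta>)]"
          and Ps = "[]"]) (auto simp: seq_holds_def)
next
  case (L_neg \<Gamma> a \<Delta>)
  then show ?case
    by (intro seq_provable_from_premises[where Ss = "[(\<Gamma>, add_mset a \<Delta>)]"
          and Ps = "[]"]) (auto simp: seq_holds_def)
next
  case (D_K prs b G \<Sigma> \<Omega>)
  then have "seq_provable L (mset (map snd prs)) {#b#}"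
    by (auto simp: ball_Un case_prod_beta)
  with D_K show ?case
    by (intro seq_provable_D_K_rule) auto
next
  case (D_D \<Gamma> \<Sigma> ag \<Omega>)
  then have "seq_provable L \<Gamma> {#}"
    by (auto simp: ball_Un)
  with D_D show ?case
    by (intro seq_provable_D_D_rule) auto
next
  case (D_T G a \<Gamma> \<Delta>)
  then have "hilbert L (Imp (Dbox G a) a)"
    by (intro ax_T) auto
  with D_T show ?case
    by (intro seq_provable_from_premises[where Ss = "[(add_mset (Dbox G a) (add_mset a \<Gamma>), \<Delta>)]"
          and Ps = "[Imp (Dbox G a) a]"]) (auto simp: seq_holds_def)
qed

theorem proposition3p13:
  fixes L :: logic and \<Gamma> \<Delta> :: "('a::finite) fm multiset"
  assumes "\<forall>a \<in># \<Gamma> + \<Delta>. wff a"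
    and "gder L \<Gamma> \<Delta>"
  shows "\<forall>gs ds. mset gs = \<Gamma> \<longrightarrow> mset ds = \<Delta> \<longrightarrow> hilbert L (Imp (Conj gs) (Disj ds))"
  using gder_seq_provable[OF assms(2,1)] by (simp only: seq_provable_def)

end
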